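(* Let $q \geq 5$ be a prime power and let $\mathcal{X}$ be a plane curve of degree $q-1$ defined over $\mathbb{F}_q$ without $\mathbb{F}_q$-linear components with $\mathrm{N}_q(\mathcal{X}) = (q-1)^2$. Then $$\sum_{i=k_0}^{q-1} (i-k_0)(i-q+2)\,a_i = 3(q-1)^2 - 3k_0.$$ In particular, $(q - k_0 - 1)\,a_{q-1} \geq 3(q-1)^2 - 3k_0$.
   Context: $\mathcal{X}(\mathbb{F}_q)=\mathcal{X}\cap\mathbb{P}^2(\mathbb{F}_q)$, $\mathrm{N}_q(\mathcal{X})=\#\mathcal{X}(\mathbb{F}_q)$; "without $\mathbb{F}_q$-linear components" means no line defined over $\mathbb{F}_q$ is a component. For $0\le i\le q+1$, $a_i$ is the number of $\mathbb{F}_q$-lines $l$ with $\#(l\cap\mathcal{X}(\mathbb{F}_q))=i$, and $k_0 := \min\{i : a_i \neq 0\}$. *)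

theory Defs
  imports "HOL-Computational_Algebra.Polynomial" "HOL-Library.Cardinality"
begin

text \<open>Trivariate polynomials over a field are represented as nested univariate
polynomials: type 'a poly poly poly = 'a[X][Y][Z] (X innermost, Z outermost).
The monomial X^i Y^j Z^k has coefficient coeff (coeff (coeff F k) j) i.\<close>

definition eval3 :: "'a::comm_ring_1 poly poly poly \<Rightarrow> 'a \<Rightarrow> 'a \<Rightarrow> 'a \<Rightarrow> 'a" where
  "eval3 F x y z = poly (poly (poly F [:[:z:]:]) [:y:]) x"

definition homog_of_degree :: "'a::zero poly poly poly \<Rightarrow> nat \<Rightarrow> bool" where
  "homog_of_degree F d \<longleftrightarrow> F \<noteq> 0 \<and>
     (\<forall>i j k. coeff (coeff (coeff F k) j) i \<noteq> 0 \<longrightarrow> i + j + k = d)"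

definition linform :: "'a::comm_ring_1 \<Rightarrow> 'a \<Rightarrow> 'a \<Rightarrow> 'a poly poly poly" where
  "linform a b c = [: [: [:0, a:], [:b:] :], [: [:c:] :] :]"

definition no_linear_components :: "'a::field poly poly poly \<Rightarrow> bool" where
  "no_linear_components F \<longleftrightarrow>
     (\<forall>a b c. (a, b, c) \<noteq> (0, 0, 0) \<longrightarrow> \<not> linform a b c dvd F)"

definition proj_points :: "('a::field \<times> 'a \<times> 'a) set set" where
  "proj_points = {{(t * x, t * y, t * z) | t. t \<noteq> 0} | x y z. (x, y, z) \<noteq> (0, 0, 0)}"

definition curve_points :: "'a::field poly poly poly \<Rightarrow> ('a \<times> 'a \<times> 'a) set set" where
  "curve_points F = {P \<in> proj_points. \<forall>(x, y, z) \<in> P. eval3 F x y z = 0}"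

definition proj_lines :: "('a::field \<times> 'a \<times> 'a) set set set" where
  "proj_lines = {{P \<in> proj_points. \<forall>(x, y, z) \<in> P. a * x + b * y + c * z = 0}
                  | a b c. (a, b, c) \<noteq> (0, 0, 0)}"

text \<open>a_i: number of lines meeting the rational points of the curve in exactly i points.\<close>
definition line_count :: "'a::field poly poly poly \<Rightarrow> nat \<Rightarrow> nat" where
  "line_count F i = card {l \<in> proj_lines. card (l \<inter> curve_points F) = i}"

definition k0 :: "'a::field poly poly poly \<Rightarrow> nat" where
  "k0 F = (LEAST i. line_count F i \<noteq> 0)"

end

(*
  A line over F_q containing at least q rational points of the curve F = 0, of degree
  d = q - 1, is a component of it. Parametrise the line as P + tQ: the restriction
  F(P + tQ) has degree at most d and t^d-coefficient F(Q), so it has too many roots and F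
  vanishes on the whole plane of the line. Substituting the linear form then leaves a
  polynomial of total degree at most d < q vanishing on all of F_q^2, which is zero.
  Hence, without F_q-linear components, every line meets the N = (q - 1)^2 rational
  points of the curve in i_l points with k0 <= i_l <= q - 1.

  Every point of PG(2, q) lies on q + 1 of its q^2 + q + 1 lines and any two points lie
  on exactly one, so sum_l i_l = (q + 1) N and sum_l i_l^2 = N (N + q). Expanding
  sum_l (i_l - k0) (i_l - q + 2) with these moments gives 3 (q - 1)^2 - 3 k0, and every
  term with i_l <= q - 2 is nonpositive, which gives the inequality.
*)
theory Submission
  imports Defs
begin

section \<open>The projective plane over a finite field\<close>

lemma card_field_ge_2: "CARD('a::{finite,field}) \<ge> 2"
proof -
  have "card {0::'a, 1} \<le> CARD('a)"
    by (rule card_mono) simp_all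
  then show ?thesis
    by simp
qed

fun proj_class :: "'a::field \<times> 'a \<times> 'a \<Rightarrow> ('a \<times> 'a \<times> 'a) set" where
  "proj_class (x, y, z) = {(t * x, t * y, t * z) | t. t \<noteq> 0}"

declare proj_class.simps [simp del]

definition plane :: "'a::field \<Rightarrow> 'a \<Rightarrow> 'a \<Rightarrow> ('a \<times> 'a \<times> 'a) set" where
  "plane a b c = {(x, y, z). a * x + b * y + c * z = 0}"

definition proj_line :: "'a::field \<Rightarrow> 'a \<Rightarrow> 'a \<Rightarrow> ('a \<times> 'a \<times> 'a) set set" where
  "proj_line a b c = {P \<in> proj_points. \<forall>(x, y, z) \<in> P. a * x + b * y + c * z = 0}"

lemma proj_points_eq: "proj_points = proj_class ` (- {(0, 0, 0)})"
proof (intro set_eqI iffI)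
  fix P assume "P \<in> proj_points"
  then obtain x y z where "P = proj_class (x, y, z)" and "(x, y, z) \<noteq> (0, 0, 0)"
    unfolding proj_points_def proj_class.simps by blast
  then show "P \<in> proj_class ` (- {(0, 0, 0)})"
    by blast
next
  fix P assume "P \<in> proj_class ` (- {(0, 0, 0)})"
  then obtain x y z where "P = proj_class (x, y, z)" and "(x, y, z) \<noteq> (0, 0, 0)"
    by auto
  then show "P \<in> proj_points"
    unfolding proj_points_def proj_class.simps by blast
qed

lemma proj_points_cases:
  assumes "P \<in> proj_points"
  obtains x y z where "P = proj_class (x, y, z)" and "(x, y, z) \<noteq> (0, 0, 0)"
  using assms unfolding proj_points_eq by (metis ComplD imageE prod_cases3 singletonI)

lemma proj_lines_eq: "proj_lines = {proj_line a b c | a b c. (a, b, c) \<noteq> (0, 0, 0)}"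
  unfolding proj_lines_def proj_line_def ..

lemma mem_proj_class_iff:
  "(u, v, w) \<in> proj_class (x, y, z) \<longleftrightarrow> (\<exists>t. t \<noteq> 0 \<and> u = t * x \<and> v = t * y \<and> w = t * z)"
  by (auto simp: proj_class.simps)

lemma proj_class_self: "v \<in> proj_class v"
  by (cases v) (simp add: mem_proj_class_iff exI[of _ 1])

lemma proj_class_scale:
  assumes "s \<noteq> 0"
  shows "proj_class (s * x, s * y, s * z) = proj_class (x, y, z)"
proof (intro set_eqI iffI)
  fix p assume "p \<in> proj_class (s * x, s * y, s * z)"
  then obtain t where "t \<noteq> 0" "p = ((t * s) * x, (t * s) * y, (t * s) * z)"
    by (auto simp: proj_class.simps)
  moreover have "t * s \<noteq> 0"
    using assms \<open>t \<noteq> 0\<close> by simp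
  ultimately show "p \<in> proj_class (x, y, z)"
    unfolding proj_class.simps by blast
next
  fix p assume "p \<in> proj_class (x, y, z)"
  then obtain t where "t \<noteq> 0" "p = ((t / s) * (s * x), (t / s) * (s * y), (t / s) * (s * z))"
    using assms by (auto simp: proj_class.simps)
  moreover have "t / s \<noteq> 0"
    using assms \<open>t \<noteq> 0\<close> by simp
  ultimately show "p \<in> proj_class (s * x, s * y, s * z)"
    unfolding proj_class.simps by blast
qed

lemma proj_class_eq_if_mem: "u \<in> proj_class v \<Longrightarrow> proj_class u = proj_class v"
  by (cases u, cases v) (auto simp: mem_proj_class_iff proj_class_scale)

lemma card_proj_class:
  assumes "v \<noteq> (0, 0, (0::'a::{finite,field}))"
  shows "card (proj_class v) = CARD('a) - 1"
proof -
  obtain x y z where v: "v = (x, y, z)"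
    by (cases v)
  have "proj_class v = (\<lambda>t. (t * x, t * y, t * z)) ` (- {0})"
    unfolding v proj_class.simps by blast
  moreover have "inj_on (\<lambda>t. (t * x, t * y, t * z)) (- {0})"
    using assms v by (auto intro!: inj_onI)
  ultimately show ?thesis
    by (simp add: card_image card_Diff_singleton Compl_eq_Diff_UNIV)
qed

lemma card_proj_class_image:
  fixes S :: "('a::{finite,field} \<times> 'a \<times> 'a) set"
  assumes "(0, 0, 0) \<notin> S"
    and "\<And>x y z t. (x, y, z) \<in> S \<Longrightarrow> t \<noteq> 0 \<Longrightarrow> (t * x, t * y, t * z) \<in> S"
  shows "card (proj_class ` S) * (CARD('a) - 1) = card S"
proof -
  have "\<Union>(proj_class ` S) = S"
  proof
    show "\<Union>(proj_class ` S) \<subseteq> S"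
    proof
      fix p assume "p \<in> \<Union>(proj_class ` S)"
      then obtain x y z where "(x, y, z) \<in> S" and "p \<in> proj_class (x, y, z)"
        by (metis UN_E prod_cases3)
      then show "p \<in> S"
        using assms(2) by (auto simp: proj_class.simps)
    qed
    show "S \<subseteq> \<Union>(proj_class ` S)"
      using proj_class_self by blast
  qed
  moreover have "(CARD('a) - 1) * card (proj_class ` S) = card (\<Union>(proj_class ` S))"
  proof (rule card_partition)
    show "card C = CARD('a) - 1" if C: "C \<in> proj_class ` S" for C
    proof -
      obtain v where "v \<in> S" and "C = proj_class v"
        using C by blast
      moreover have "v \<noteq> (0, 0, 0)"
        using assms(1) \<open>v \<in> S\<close> by blast
      ultimately show ?thesis
        by (simp add: card_proj_class)
    qed
    show "C1 \<inter> C2 = {}" if "C1 \<in> proj_class ` S" "C2 \<in> proj_class ` S" "C1 \<noteq> C2" for C1 C2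
      using that proj_class_eq_if_mem by blast
  qed simp_all
  ultimately show ?thesis
    by (simp add: mult.commute)
qed

lemma card_proj_points:
  "card (proj_points :: ('a::{finite,field} \<times> 'a \<times> 'a) set set) = CARD('a)^2 + CARD('a) + 1"
proof -
  let ?q = "CARD('a)"
  have "card (UNIV :: ('a \<times> 'a \<times> 'a) set) = ?q ^ 3"
    by (simp add: UNIV_Times_UNIV[symmetric] card_cartesian_product power3_eq_cube
        del: UNIV_Times_UNIV)
  then have "card (- {(0::'a, 0::'a, 0::'a)}) = ?q ^ 3 - 1"
    by (simp add: Compl_eq_Diff_UNIV card_Diff_singleton)
  then have "card (proj_points :: ('a \<times> 'a \<times> 'a) set set) * (?q - 1) = ?q ^ 3 - 1"
    unfolding proj_points_eq by (subst card_proj_class_image) auto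
  also have "?q ^ 3 - 1 = (?q^2 + ?q + 1) * (?q - 1)"
    using card_field_ge_2[where 'a='a]
    by (cases ?q) (simp_all add: algebra_simps power2_eq_square power3_eq_cube)
  finally have "card (proj_points :: ('a \<times> 'a \<times> 'a) set set) * (?q - 1)
      = (?q^2 + ?q + 1) * (?q - 1)" .
  moreover have "?q - 1 \<noteq> 0"
    using card_field_ge_2[where 'a='a] by simp
  ultimately show ?thesis
    by (metis mult_right_cancel)
qed

lemma mem_proj_line_iff:
  assumes "(x, y, z) \<noteq> (0, 0, 0)"
  shows "proj_class (x, y, z) \<in> proj_line a b c \<longleftrightarrow> a * x + b * y + c * z = 0"
proof
  assume "proj_class (x, y, z) \<in> proj_line a b c"
  then show "a * x + b * y + c * z = 0"
    unfolding proj_line_def using proj_class_self[of "(x, y, z)"] by fast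
next
  assume on_plane: "a * x + b * y + c * z = 0"
  have "a * (t * x) + b * (t * y) + c * (t * z) = t * (a * x + b * y + c * z)" for t
    by (simp add: algebra_simps)
  then have "\<forall>(u, v, w) \<in> proj_class (x, y, z). a * u + b * v + c * w = 0"
    using on_plane by (auto simp: proj_class.simps)
  moreover have "proj_class (x, y, z) \<in> proj_points"
    using assms by (simp add: proj_points_eq)
  ultimately show "proj_class (x, y, z) \<in> proj_line a b c"
    unfolding proj_line_def by blast
qed

lemma proj_line_eq_image: "proj_line a b c = proj_class ` (plane a b c - {(0, 0, 0)})"
proof (intro set_eqI iffI)
  fix P assume P: "P \<in> proj_line a b c"
  then have "P \<in> proj_points"
    unfolding proj_line_def by blast
  then obtain x y z where xyz: "P = proj_class (x, y, z)" "(x, y, z) \<noteq> (0, 0, 0)"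
    by (rule proj_points_cases)
  with P have "a * x + b * y + c * z = 0"
    using mem_proj_line_iff by blast
  with xyz show "P \<in> proj_class ` (plane a b c - {(0, 0, 0)})"
    unfolding plane_def by blast
next
  fix P assume "P \<in> proj_class ` (plane a b c - {(0, 0, 0)})"
  then obtain x y z where "P = proj_class (x, y, z)" "(x, y, z) \<noteq> (0, 0, 0)"
      "a * x + b * y + c * z = 0"
    unfolding plane_def by blast
  then show "P \<in> proj_line a b c"
    using mem_proj_line_iff by blast
qed

lemma plane_scale:
  assumes "t \<noteq> 0"
  shows "plane (t * a) (t * b) (t * c) = plane a b c"
proof -
  have "t * a * x + t * b * y + t * c * z = t * (a * x + b * y + c * z)" for x y z
    by (simp add: algebra_simps)
  then show ?thesis
    using assms unfolding plane_def by simp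
qed

lemma proj_line_scale: "t \<noteq> 0 \<Longrightarrow> proj_line (t * a) (t * b) (t * c) = proj_line a b c"
  by (simp add: proj_line_eq_image plane_scale)

lemma plane_parametrization:
  fixes a b c :: "'a::field"
  assumes "(a, b, c) \<noteq> (0, 0, 0)"
  obtains p1 p2 p3 q1 q2 q3 where
    "bij_betw (\<lambda>(s, t). (s * p1 + t * q1, s * p2 + t * q2, s * p3 + t * q3)) UNIV (plane a b c)"
proof -
  consider "c \<noteq> 0" | "c = 0" "b \<noteq> 0" | "c = 0" "b = 0" "a \<noteq> 0"
    using assms by auto
  then show ?thesis
  proof cases
    case 1
    have "bij_betw (\<lambda>(s, t). (s, t, s * (- a / c) + t * (- b / c))) UNIV (plane a b c)"
      unfolding bij_betw_def inj_on_def plane_def using 1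
      by (auto simp: image_iff field_simps eq_neg_iff_add_eq_0 add_ac intro!: exI[of _ "(_, _)"])
    then show ?thesis
      using that[of 1 0 0 1 "- a / c" "- b / c"] by simp
  next
    case 2
    have "bij_betw (\<lambda>(s, t). (s, s * (- a / b), t)) UNIV (plane a b c)"
      unfolding bij_betw_def inj_on_def plane_def using 2
      by (auto simp: image_iff field_simps eq_neg_iff_add_eq_0 add_ac intro!: exI[of _ "(_, _)"])
    then show ?thesis
      using that[of 1 0 "- a / b" 0 0 1] by simp
  next
    case 3
    have "bij_betw (\<lambda>(s, t). (0, s, t)) UNIV (plane a b c)"
      unfolding bij_betw_def inj_on_def plane_def using 3
      by (auto simp: image_iff intro!: exI[of _ "(_, _)"])
    then show ?thesis
      using that[of 0 0 1 0 0 1] by simp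
  qed
qed

lemma plane_spanned:
  fixes a b c :: "'a::field"
  assumes "(a, b, c) \<noteq> (0, 0, 0)"
  obtains p1 p2 p3 q1 q2 q3 where
    "\<And>v. v \<in> plane a b c \<Longrightarrow> \<exists>s t. v = (s * p1 + t * q1, s * p2 + t * q2, s * p3 + t * q3)"
proof -
  obtain p1 p2 p3 q1 q2 q3 where
    bij: "bij_betw (\<lambda>(s, t). (s * p1 + t * q1, s * p2 + t * q2, s * p3 + t * q3)) UNIV (plane a b c)"
    using plane_parametrization[OF assms] .
  have "\<exists>s t. v = (s * p1 + t * q1, s * p2 + t * q2, s * p3 + t * q3)" if "v \<in> plane a b c" for v
  proof -
    have "v \<in> range (\<lambda>(s, t). (s * p1 + t * q1, s * p2 + t * q2, s * p3 + t * q3))"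
      using bij_betw_imp_surj_on[OF bij] that by simp
    then show ?thesis
      by auto
  qed
  then show ?thesis
    by (rule that)
qed

lemma card_plane:
  fixes a b c :: "'a::{finite,field}"
  assumes "(a, b, c) \<noteq> (0, 0, 0)"
  shows "card (plane a b c) = CARD('a) ^ 2"
proof -
  obtain p1 p2 p3 q1 q2 q3 where
    "bij_betw (\<lambda>(s, t). (s * p1 + t * q1, s * p2 + t * q2, s * p3 + t * q3)) UNIV (plane a b c)"
    using plane_parametrization[OF assms] .
  then have "card (plane a b c) = card (UNIV :: ('a \<times> 'a) set)"
    by (rule bij_betw_same_card[symmetric])
  then show ?thesis
    by (simp add: UNIV_Times_UNIV[symmetric] card_cartesian_product power2_eq_square
        del: UNIV_Times_UNIV)
qed

lemma card_proj_line:
  fixes a b c :: "'a::{finite,field}"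
  assumes "(a, b, c) \<noteq> (0, 0, 0)"
  shows "card (proj_line a b c) = CARD('a) + 1"
proof -
  let ?q = "CARD('a)"
  have "card (proj_line a b c) * (?q - 1) = card (plane a b c - {(0, 0, 0)})"
    unfolding proj_line_eq_image
  proof (rule card_proj_class_image)
    fix x y z t :: 'a
    assume "(x, y, z) \<in> plane a b c - {(0, 0, 0)}" and "t \<noteq> 0"
    moreover have "a * (t * x) + b * (t * y) + c * (t * z) = t * (a * x + b * y + c * z)"
      by (simp add: algebra_simps)
    ultimately show "(t * x, t * y, t * z) \<in> plane a b c - {(0, 0, 0)}"
      by (auto simp: plane_def)
  qed simp
  also have "\<dots> = (?q + 1) * (?q - 1)"
    using card_plane[OF assms]
    by (simp add: card_Diff_singleton plane_def power2_eq_square algebra_simps)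
  finally have "card (proj_line a b c) * (?q - 1) = (?q + 1) * (?q - 1)" .
  moreover have "?q - 1 \<noteq> 0"
    using card_field_ge_2[where 'a='a] by simp
  ultimately show ?thesis
    by (metis mult_right_cancel)
qed

lemma parallel_if_cross_eq_0:
  fixes a b c x y z :: "'a::field"
  assumes nz: "(a, b, c) \<noteq> (0, 0, 0)"
    and "b * z - c * y = 0" and "c * x - a * z = 0" and "a * y - b * x = 0"
  shows "\<exists>t. x = t * a \<and> y = t * b \<and> z = t * c"
proof -
  consider "a \<noteq> 0" | "a = 0" "b \<noteq> 0" | "a = 0" "b = 0" "c \<noteq> 0"
    using nz by auto
  then show ?thesis
  proof cases
    case 1
    with assms show ?thesis
      by (intro exI[of _ "x / a"]) (auto simp: field_simps)
  next
    case 2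
    with assms show ?thesis
      by (intro exI[of _ "y / b"]) (auto simp: field_simps)
  next
    case 3
    with assms show ?thesis
      by (intro exI[of _ "z / c"]) (auto simp: field_simps)
  qed
qed

lemma cross_neq_0_if_not_parallel:
  fixes a b c a' b' c' :: "'a::field"
  assumes "(a, b, c) \<noteq> (0, 0, 0)" and "(a', b', c') \<noteq> (0, 0, 0)"
    and "proj_class (a, b, c) \<noteq> proj_class (a', b', c')"
  shows "(b * c' - c * b', c * a' - a * c', a * b' - b * a') \<noteq> (0, 0, 0)"
proof
  assume "(b * c' - c * b', c * a' - a * c', a * b' - b * a') = (0, 0, 0)"
  then have "b * c' - c * b' = 0" and "c * a' - a * c' = 0" and "a * b' - b * a' = 0"
    by auto
  then obtain t where t: "a' = t * a" "b' = t * b" "c' = t * c"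
    using parallel_if_cross_eq_0[OF assms(1)] by blast
  then have "t \<noteq> 0"
    using assms(2) by auto
  then show False
    using assms(3) t proj_class_scale[of t a b c] by simp
qed

lemma parallel_cross_if_orthogonal:
  fixes a b c a' b' c' x y z :: "'a::field"
  assumes "(b * c' - c * b', c * a' - a * c', a * b' - b * a') \<noteq> (0, 0, 0)"
    and "a * x + b * y + c * z = 0" and "a' * x + b' * y + c' * z = 0"
  shows "\<exists>t. x = t * (b * c' - c * b') \<and> y = t * (c * a' - a * c') \<and> z = t * (a * b' - b * a')"
proof (rule parallel_if_cross_eq_0[OF assms(1)])
  have "(c * a' - a * c') * z - (a * b' - b * a') * y
      = a' * (a * x + b * y + c * z) - a * (a' * x + b' * y + c' * z)"
    by (simp add: algebra_simps)
  then show "(c * a' - a * c') * z - (a * b' - b * a') * y = 0"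
    using assms by simp
  have "(a * b' - b * a') * x - (b * c' - c * b') * z
      = b' * (a * x + b * y + c * z) - b * (a' * x + b' * y + c' * z)"
    by (simp add: algebra_simps)
  then show "(a * b' - b * a') * x - (b * c' - c * b') * z = 0"
    using assms by simp
  have "(b * c' - c * b') * y - (c * a' - a * c') * x
      = c' * (a * x + b * y + c * z) - c * (a' * x + b' * y + c' * z)"
    by (simp add: algebra_simps)
  then show "(b * c' - c * b') * y - (c * a' - a * c') * x = 0"
    using assms by simp
qed

lemma card_lines_through_two_points:
  assumes "P \<in> proj_points" and "Q \<in> proj_points" and "P \<noteq> Q"
  shows "card {l \<in> proj_lines. P \<in> l \<and> Q \<in> l} = 1"
proof -
  obtain a b c where P: "P = proj_class (a, b, c)" and nz_P: "(a, b, c) \<noteq> (0, 0, 0)"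
    using assms(1) by (rule proj_points_cases)
  obtain a' b' c' where Q: "Q = proj_class (a', b', c')" and nz_Q: "(a', b', c') \<noteq> (0, 0, 0)"
    using assms(2) by (rule proj_points_cases)
  define n1 n2 n3 where "n1 = b * c' - c * b'" and "n2 = c * a' - a * c'" and "n3 = a * b' - b * a'"
  have nz_n: "(n1, n2, n3) \<noteq> (0, 0, 0)"
    unfolding n1_def n2_def n3_def using nz_P nz_Q assms(3) P Q
    by (intro cross_neq_0_if_not_parallel) auto
  have "{l \<in> proj_lines. P \<in> l \<and> Q \<in> l} = {proj_line n1 n2 n3}"
  proof (intro set_eqI iffI)
    fix l assume "l \<in> {l \<in> proj_lines. P \<in> l \<and> Q \<in> l}"
    then obtain \<alpha> \<beta> \<gamma> where l: "l = proj_line \<alpha> \<beta> \<gamma>" and nz_l: "(\<alpha>, \<beta>, \<gamma>) \<noteq> (0, 0, 0)"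
      and "P \<in> l" and "Q \<in> l"
      unfolding proj_lines_eq by blast
    then have "a * \<alpha> + b * \<beta> + c * \<gamma> = 0" and "a' * \<alpha> + b' * \<beta> + c' * \<gamma> = 0"
      using P Q mem_proj_line_iff[OF nz_P] mem_proj_line_iff[OF nz_Q] by (simp_all add: mult.commute)
    then obtain t where "\<alpha> = t * n1" and "\<beta> = t * n2" and "\<gamma> = t * n3"
      using parallel_cross_if_orthogonal nz_n unfolding n1_def n2_def n3_def by blast
    moreover from this have "t \<noteq> 0"
      using nz_l by auto
    ultimately show "l \<in> {proj_line n1 n2 n3}"
      using l proj_line_scale by simp
  next
    fix l assume "l \<in> {proj_line n1 n2 n3}"
    moreover have "proj_line n1 n2 n3 \<in> proj_lines"
      unfolding proj_lines_eq using nz_n by blast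
    moreover have "n1 * a + n2 * b + n3 * c = 0" and "n1 * a' + n2 * b' + n3 * c' = 0"
      unfolding n1_def n2_def n3_def by (simp_all add: algebra_simps)
    ultimately show "l \<in> {l \<in> proj_lines. P \<in> l \<and> Q \<in> l}"
      using P Q mem_proj_line_iff[OF nz_P] mem_proj_line_iff[OF nz_Q] by simp
  qed
  then show ?thesis
    by simp
qed

lemma mem_proj_lines_subset: "l \<in> proj_lines \<Longrightarrow> l \<subseteq> proj_points"
  unfolding proj_lines_def by blast

lemma card_mem_proj_lines:
  "l \<in> (proj_lines :: ('a::{finite,field} \<times> 'a \<times> 'a) set set set) \<Longrightarrow> card l = CARD('a) + 1"
  unfolding proj_lines_eq using card_proj_line by blast

(* Each point Q other than P lies on exactly one line through P, and each such line carries
   q of these points. *)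
lemma card_lines_through_point:
  fixes P :: "('a::{finite,field} \<times> 'a \<times> 'a) set"
  assumes P: "P \<in> proj_points"
  shows "card {l \<in> proj_lines. P \<in> l} = CARD('a) + 1"
proof -
  let ?q = "CARD('a)"
  let ?L = "{l \<in> proj_lines. P \<in> l}"
  have "(\<Sum>l\<in>?L. card {Q \<in> proj_points - {P}. Q \<in> l}) = 1 * card (proj_points - {P})"
  proof (rule sum_multicount)
    show "\<forall>Q \<in> proj_points - {P}. card {l \<in> ?L. Q \<in> l} = 1"
    proof
      fix Q assume "Q \<in> proj_points - {P}"
      moreover have "{l \<in> ?L. Q \<in> l} = {l \<in> proj_lines. P \<in> l \<and> Q \<in> l}"
        by blast
      ultimately show "card {l \<in> ?L. Q \<in> l} = 1"
        using card_lines_through_two_points[OF P] by auto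
    qed
  qed simp_all
  moreover have "card {Q \<in> proj_points - {P}. Q \<in> l} = ?q" if "l \<in> ?L" for l
  proof -
    have "{Q \<in> proj_points - {P}. Q \<in> l} = l - {P}"
      using that mem_proj_lines_subset by blast
    then show ?thesis
      using that card_mem_proj_lines[of l] by simp
  qed
  moreover have "card (proj_points - {P}) = ?q * (?q + 1)"
    using P by (simp add: card_Diff_singleton card_proj_points power2_eq_square algebra_simps)
  ultimately have "card ?L * ?q = (?q + 1) * ?q"
    by (simp add: algebra_simps)
  moreover have "?q \<noteq> 0"
    using card_field_ge_2[where 'a='a] by simp
  ultimately show ?thesis
    by (metis mult_right_cancel)
qed

lemma card_proj_lines:
  "card (proj_lines :: ('a::{finite,field} \<times> 'a \<times> 'a) set set set) = CARD('a)^2 + CARD('a) + 1"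
proof -
  let ?q = "CARD('a)"
  let ?L = "proj_lines :: ('a \<times> 'a \<times> 'a) set set set"
  have "(\<Sum>l\<in>?L. card {P \<in> proj_points. P \<in> l})
      = (?q + 1) * card (proj_points :: ('a \<times> 'a \<times> 'a) set set)"
    using card_lines_through_point[where 'a='a] by (intro sum_multicount) simp_all
  moreover have "card {P \<in> proj_points. P \<in> l} = ?q + 1" if "l \<in> ?L" for l
  proof -
    have "{P \<in> proj_points. P \<in> l} = l"
      using mem_proj_lines_subset[OF that] by blast
    then show ?thesis
      using card_mem_proj_lines[OF that] by simp
  qed
  ultimately have "card ?L * (?q + 1) = (?q^2 + ?q + 1) * (?q + 1)"
    by (simp add: card_proj_points mult.commute)
  then show ?thesis
    by (metis add_is_0 mult_right_cancel one_neq_zero)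
qed

lemma sum_card_line_inter:
  fixes C :: "('a::{finite,field} \<times> 'a \<times> 'a) set set"
  assumes "C \<subseteq> proj_points"
  shows "(\<Sum>l\<in>proj_lines. card (l \<inter> C)) = (CARD('a) + 1) * card C"
proof -
  have "(\<Sum>l\<in>proj_lines. card {P \<in> C. P \<in> l}) = (CARD('a) + 1) * card C"
    using assms card_lines_through_point[where 'a='a] by (intro sum_multicount) auto
  then show ?thesis
    by (simp add: Int_def conj_commute)
qed

lemma sum_card_line_inter_squared:
  fixes C :: "('a::{finite,field} \<times> 'a \<times> 'a) set set"
  assumes "C \<subseteq> proj_points"
  shows "(\<Sum>l\<in>proj_lines. card (l \<inter> C) ^ 2) = card C * (card C + CARD('a))"
proof -
  let ?q = "CARD('a)"
  have "card (l \<inter> C) ^ 2 = card {PQ \<in> C \<times> C. fst PQ \<in> l \<and> snd PQ \<in> l}" for l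
  proof -
    have "{PQ \<in> C \<times> C. fst PQ \<in> l \<and> snd PQ \<in> l} = (l \<inter> C) \<times> (l \<inter> C)"
      by auto
    then show ?thesis
      by (simp add: card_cartesian_product power2_eq_square)
  qed
  then have "(\<Sum>l\<in>proj_lines. card (l \<inter> C) ^ 2)
      = (\<Sum>l\<in>proj_lines. card {PQ \<in> C \<times> C. fst PQ \<in> l \<and> snd PQ \<in> l})"
    by simp
  also have "\<dots> = (\<Sum>PQ\<in>C \<times> C. card {l \<in> proj_lines. fst PQ \<in> l \<and> snd PQ \<in> l})"
    by (rule sum_multicount_gen) simp_all
  also have "\<dots> = (\<Sum>P\<in>C. \<Sum>Q\<in>C. card {l \<in> proj_lines. P \<in> l \<and> Q \<in> l})"
    by (simp add: sum.cartesian_product split_beta')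
  also have "\<dots> = (\<Sum>P\<in>C. \<Sum>Q\<in>C. 1 + (if P = Q then ?q else 0))"
  proof (intro sum.cong refl)
    fix P Q assume "P \<in> C" and "Q \<in> C"
    then show "card {l \<in> proj_lines. P \<in> l \<and> Q \<in> l} = 1 + (if P = Q then ?q else 0)"
      using assms card_lines_through_two_points card_lines_through_point[of P] by auto
  qed
  also have "\<dots> = (\<Sum>P\<in>C. card C + ?q)"
    by (intro sum.cong refl) (simp only: sum.distrib, simp add: sum.delta')
  also have "\<dots> = card C * (card C + ?q)"
    by simp
  finally show ?thesis .
qed


section \<open>Trivariate polynomials in nested form\<close>

lemma poly_eq_sum_upto:
  fixes p :: "'a::comm_semiring_1 poly"
  assumes "degree p \<le> n"
  shows "poly p x = (\<Sum>i\<le>n. coeff p i * x ^ i)"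
proof -
  have "poly p x = poly (\<Sum>i\<le>n. monom (coeff p i) i) x"
    by (simp add: poly_as_sum_of_monoms'[OF assms])
  then show ?thesis
    by (simp add: poly_sum poly_monom)
qed

lemma sum_powers_eq_0_imp_coeff_eq_0:
  fixes c :: "nat \<Rightarrow> 'a::{finite,field}"
  assumes "n < CARD('a)" and "\<And>x. (\<Sum>i\<le>n. c i * x ^ i) = 0" and "i \<le> n"
  shows "c i = 0"
proof -
  define p where "p = (\<Sum>i\<le>n. monom (c i) i)"
  have "degree p \<le> n"
    unfolding p_def by (intro degree_sum_le) (auto intro: order.trans[OF degree_monom_le])
  moreover have "poly p x = 0" for x
    using assms(2) by (simp add: p_def poly_sum poly_monom)
  ultimately have "p = 0"
    using assms(1) poly_eqI_degree[of UNIV p 0] by force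
  moreover have "coeff p i = c i"
    using assms(3) by (simp add: p_def coeff_sum)
  ultimately show ?thesis
    by simp
qed

(* A vanishing t^d-coefficient counts as one more root, at infinity. *)
lemma poly_eq_0_if_roots_exceed_degree_bound:
  fixes G :: "'a::idom poly"
  assumes deg: "degree G \<le> d"
    and roots: "d < card {t. poly G t = 0} + (if coeff G d = 0 then 1 else 0)"
  shows "G = 0"
proof (rule ccontr)
  assume "G \<noteq> 0"
  then have "card {t. poly G t = 0} \<le> degree G"
    by (rule card_poly_roots_bound)
  moreover have "degree G < d" if "coeff G d = 0"
    using that deg \<open>G \<noteq> 0\<close> by (metis le_neq_implies_less leading_coeff_0_iff)
  ultimately show False
    using roots deg by (auto split: if_splits)
qed

lemma coeff_mult_at_degree_bounds:
  fixes p r :: "'a::comm_semiring_1 poly"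
  assumes "degree p \<le> m" and "degree r \<le> n"
  shows "coeff (p * r) (m + n) = coeff p m * coeff r n"
proof -
  have "coeff (p * r) (m + n) = (\<Sum>i\<le>m + n. coeff p i * coeff r (m + n - i))"
    by (rule coeff_mult)
  also have "\<dots> = (\<Sum>i\<in>{m}. coeff p i * coeff r (m + n - i))"
  proof (rule sum.mono_neutral_right)
    show "\<forall>i\<in>{..m + n} - {m}. coeff p i * coeff r (m + n - i) = 0"
    proof
      fix i assume "i \<in> {..m + n} - {m}"
      then have "m < i \<or> n < m + n - i"
        by auto
      then show "coeff p i * coeff r (m + n - i) = 0"
        using assms by (auto simp: coeff_eq_0)
    qed
  qed auto
  finally show ?thesis
    by simp
qed

lemma coeff_power_at_degree_bound:
  fixes p :: "'a::comm_semiring_1 poly"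
  assumes "degree p \<le> m"
  shows "degree (p ^ k) \<le> k * m \<and> coeff (p ^ k) (k * m) = coeff p m ^ k"
proof (induction k)
  case (Suc k)
  have "degree (p * p ^ k) \<le> m + k * m"
    using Suc assms by (meson add_mono degree_mult_le order.trans)
  moreover have "coeff (p * p ^ k) (m + k * m) = coeff p m * coeff (p ^ k) (k * m)"
    using Suc assms by (intro coeff_mult_at_degree_bounds) auto
  ultimately show ?case
    using Suc by simp
qed simp

lemma linear_powers_product:
  fixes p1 q1 p2 q2 p3 q3 :: "'a::comm_semiring_1"
  shows "degree ([:p1, q1:] ^ i * [:p2, q2:] ^ j * [:p3, q3:] ^ k) \<le> i + j + k
    \<and> coeff ([:p1, q1:] ^ i * [:p2, q2:] ^ j * [:p3, q3:] ^ k) (i + j + k) = q1 ^ i * q2 ^ j * q3 ^ k"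
proof -
  have "degree [:p, q:] \<le> 1" for p q :: 'a
    by simp
  note pow = coeff_power_at_degree_bound[OF this, simplified]
  have deg12: "degree ([:p1, q1:] ^ i * [:p2, q2:] ^ j) \<le> i + j"
    using pow[of p1 q1 i] pow[of p2 q2 j] by (meson add_mono degree_mult_le order.trans)
  then have "degree ([:p1, q1:] ^ i * [:p2, q2:] ^ j * [:p3, q3:] ^ k) \<le> i + j + k"
    using pow[of p3 q3 k] by (meson add_mono degree_mult_le order.trans)
  moreover have "coeff ([:p1, q1:] ^ i * [:p2, q2:] ^ j * [:p3, q3:] ^ k) (i + j + k)
      = q1 ^ i * q2 ^ j * q3 ^ k"
    using pow[of p1 q1 i] pow[of p2 q2 j] pow[of p3 q3 k] deg12
    by (simp add: coeff_mult_at_degree_bounds)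
  ultimately show ?thesis ..
qed

lemma homog_of_degreeD:
  "homog_of_degree F d \<Longrightarrow> coeff (coeff (coeff F k) j) i \<noteq> 0 \<Longrightarrow> i + j + k = d"
  unfolding homog_of_degree_def by blast

lemma homog_degree_le:
  assumes "homog_of_degree F d"
  shows "degree F \<le> d" and "degree (coeff F k) \<le> d" and "degree (coeff (coeff F k) j) \<le> d"
proof -
  have vanish: "coeff (coeff (coeff F k) j) i = 0" if "d < i \<or> d < j \<or> d < k" for i j k
  proof (rule ccontr)
    assume "coeff (coeff (coeff F k) j) i \<noteq> 0"
    then have "i + j + k = d"
      by (rule homog_of_degreeD[OF assms])
    with that show False
      by linarith
  qed
  show "degree (coeff (coeff F k) j) \<le> d"
    by (rule degree_le) (simp add: vanish)
  show "degree (coeff F k) \<le> d"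
    by (rule degree_le) (auto intro: poly_eqI simp: vanish)
  show "degree F \<le> d"
    by (rule degree_le) (auto intro!: poly_eqI simp: vanish)
qed

lemma eval3_eq_sum_coeff:
  assumes "degree F \<le> d"
  shows "eval3 F x y z = (\<Sum>k\<le>d. poly (poly (coeff F k) [:y:]) x * z ^ k)"
  unfolding eval3_def by (simp add: poly_eq_sum_upto[OF assms] poly_sum poly_power)

lemma poly2_eq_sum:
  fixes p :: "'a::comm_ring_1 poly poly"
  assumes "degree p \<le> d" and "\<And>j. degree (coeff p j) \<le> d"
  shows "poly (poly p [:y:]) x = (\<Sum>j\<le>d. (\<Sum>i\<le>d. coeff (coeff p j) i * x ^ i) * y ^ j)"
  by (simp add: poly_eq_sum_upto[OF assms(1)] poly_eq_sum_upto[OF assms(2)] poly_sum poly_power)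

lemma eval3_eq_sum:
  assumes "homog_of_degree F d"
  shows "eval3 F x y z =
    (\<Sum>k\<le>d. \<Sum>j\<le>d. \<Sum>i\<le>d. coeff (coeff (coeff F k) j) i * x ^ i * y ^ j * z ^ k)"
  by (simp add: eval3_eq_sum_coeff[OF homog_degree_le(1)[OF assms]]
      poly2_eq_sum[OF homog_degree_le(2,3)[OF assms]] sum_distrib_right)

lemma eval3_homogeneous:
  assumes "homog_of_degree F d"
  shows "eval3 F (s * x) (s * y) (s * z) = s ^ d * eval3 F x y z"
proof -
  have "coeff (coeff (coeff F k) j) i * (s * x) ^ i * (s * y) ^ j * (s * z) ^ k
      = s ^ d * (coeff (coeff (coeff F k) j) i * x ^ i * y ^ j * z ^ k)" for i j k
    using homog_of_degreeD[OF assms, of k j i]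
    by (cases "coeff (coeff (coeff F k) j) i = 0") (auto simp: power_mult_distrib power_add)
  then show ?thesis
    by (simp add: eval3_eq_sum[OF assms] sum_distrib_left)
qed

lemma restriction_to_line:
  fixes F :: "'a::field poly poly poly"
  assumes "homog_of_degree F d"
  obtains G where "\<And>t. poly G t = eval3 F (p1 + t * q1) (p2 + t * q2) (p3 + t * q3)"
    and "degree G \<le> d" and "coeff G d = eval3 F q1 q2 q3"
proof -
  define M where "M i j k = [:p1, q1:] ^ i * [:p2, q2:] ^ j * [:p3, q3:] ^ k" for i j k
  note M = linear_powers_product[of p1 q1 i p2 q2 j p3 q3 k for i j k, folded M_def]
  define G where "G = (\<Sum>k\<le>d. \<Sum>j\<le>d. \<Sum>i\<le>d. smult (coeff (coeff (coeff F k) j) i) (M i j k))"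
  have "poly G t = eval3 F (p1 + t * q1) (p2 + t * q2) (p3 + t * q3)" for t
    by (simp add: G_def M_def eval3_eq_sum[OF assms] poly_sum algebra_simps)
  moreover have "degree G \<le> d"
  proof -
    have "degree (smult (coeff (coeff (coeff F k) j) i) (M i j k)) \<le> d" for i j k
      using M[of i j k] homog_of_degreeD[OF assms, of k j i]
      by (cases "coeff (coeff (coeff F k) j) i = 0") auto
    then show ?thesis
      unfolding G_def by (intro degree_sum_le) auto
  qed
  moreover have "coeff G d = eval3 F q1 q2 q3"
  proof -
    have term_coeff: "coeff (smult (coeff (coeff (coeff F k) j) i) (M i j k)) d
        = coeff (coeff (coeff F k) j) i * q1 ^ i * q2 ^ j * q3 ^ k" for i j k
      using M[of i j k] homog_of_degreeD[OF assms, of k j i]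
      by (cases "coeff (coeff (coeff F k) j) i = 0") (auto simp: mult.assoc)
    then show ?thesis
      by (simp only: G_def coeff_sum term_coeff eval3_eq_sum[OF assms])
  qed
  ultimately show ?thesis
    using that by blast
qed

lemma eval3_poly_subst: "poly (poly (poly F w) [:y:]) x = eval3 F x y (poly (poly w [:y:]) x)"
  by (induction F rule: pCons_induct) (simp_all add: eval3_def)

lemma poly2_poly_subst: "poly (poly G w) x = poly (poly G [:poly w x:]) x"
  by (induction G rule: pCons_induct) simp_all

lemma poly_coeff_eq_0_if_eval3_vanishes:
  fixes F :: "'a::{finite,field} poly poly poly"
  assumes deg: "degree F < CARD('a)" and vanish: "\<And>z. eval3 F x y z = 0"
  shows "poly (poly (coeff F k) [:y:]) x = 0"
proof (cases "k \<le> degree F")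
  case True
  show ?thesis
  proof (rule sum_powers_eq_0_imp_coeff_eq_0[OF deg _ True])
    show "(\<Sum>k\<le>degree F. poly (poly (coeff F k) [:y:]) x * z ^ k) = 0" for z
      using vanish[of z] unfolding eval3_eq_sum_coeff[OF order.refl] .
  qed
next
  case False
  then show ?thesis
    by (simp add: coeff_eq_0)
qed

lemma poly2_eq_0_if_vanishes:
  fixes R :: "'a::{finite,field} poly poly"
  assumes deg: "degree R \<le> n" and deg_coeff: "\<And>j. degree (coeff R j) \<le> n"
    and n: "n < CARD('a)" and vanish: "\<And>x y. poly (poly R [:y:]) x = 0"
  shows "R = 0"
proof -
  have inner: "(\<Sum>i\<le>n. coeff (coeff R j) i * x ^ i) = 0" if "j \<le> n" for x j
  proof (rule sum_powers_eq_0_imp_coeff_eq_0[OF n _ that])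
    show "(\<Sum>j\<le>n. (\<Sum>i\<le>n. coeff (coeff R j) i * x ^ i) * y ^ j) = 0" for y
      using vanish[of y x] unfolding poly2_eq_sum[OF deg deg_coeff] .
  qed
  have "coeff (coeff R j) i = 0" for i j
  proof (cases "i \<le> n \<and> j \<le> n")
    case True
    then show ?thesis
      using sum_powers_eq_0_imp_coeff_eq_0[OF n inner] by blast
  next
    case False
    then show ?thesis
      using deg deg_coeff[of j] by (auto simp: coeff_eq_0)
  qed
  then show ?thesis
    by (metis coeff_0 poly_eqI)
qed

definition total_degree_le :: "'a::zero poly poly \<Rightarrow> nat \<Rightarrow> bool" where
  "total_degree_le p n \<longleftrightarrow> (\<forall>i j. coeff (coeff p j) i \<noteq> 0 \<longrightarrow> i + j \<le> n)"

lemma total_degree_leD: "total_degree_le p n \<Longrightarrow> coeff (coeff p j) i \<noteq> 0 \<Longrightarrow> i + j \<le> n"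
  unfolding total_degree_le_def by blast

lemma total_degree_le_mono: "total_degree_le p n \<Longrightarrow> n \<le> m \<Longrightarrow> total_degree_le p m"
  unfolding total_degree_le_def by force

lemma total_degree_le_add:
  "total_degree_le p n \<Longrightarrow> total_degree_le q n \<Longrightarrow> total_degree_le (p + q) n"
  unfolding total_degree_le_def by force

lemma total_degree_le_sum:
  "(\<And>a. a \<in> A \<Longrightarrow> total_degree_le (f a) n) \<Longrightarrow> total_degree_le (sum f A) n"
proof (induction A rule: infinite_finite_induct)
  case (insert x A)
  then show ?case
    by (simp add: total_degree_le_add)
qed (simp_all add: total_degree_le_def)

lemma total_degree_le_mult:
  fixes p q :: "'a::comm_semiring_1 poly poly"
  assumes p: "total_degree_le p n" and q: "total_degree_le q m"
  shows "total_degree_le (p * q) (n + m)"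
  unfolding total_degree_le_def
proof (intro allI impI)
  fix i j
  assume "coeff (coeff (p * q) j) i \<noteq> 0"
  then obtain a b where a: "a \<le> j" and b: "b \<le> i"
    and "coeff (coeff p a) b * coeff (coeff q (j - a)) (i - b) \<noteq> 0"
    by (auto simp: coeff_mult coeff_sum elim!: sum.not_neutral_contains_not_neutral)
  then have "coeff (coeff p a) b \<noteq> 0" and "coeff (coeff q (j - a)) (i - b) \<noteq> 0"
    by auto
  then have "b + a \<le> n" and "(i - b) + (j - a) \<le> m"
    using total_degree_leD[OF p] total_degree_leD[OF q] by blast+
  with a b show "i + j \<le> n + m"
    by linarith
qed

lemma total_degree_le_power:
  fixes p :: "'a::comm_semiring_1 poly poly"
  assumes "total_degree_le p n"
  shows "total_degree_le (p ^ k) (k * n)"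
proof (induction k)
  case 0
  then show ?case
    by (simp add: total_degree_le_def coeff_1)
next
  case (Suc k)
  then show ?case
    using total_degree_le_mult[OF assms] by simp
qed

lemma total_degree_le_linear: "total_degree_le [:[:0, \<alpha>:], [:\<beta>:]:] 1"
  unfolding total_degree_le_def by (auto simp: coeff_pCons split: nat.splits)

lemma total_degree_le_coeff_homog:
  "homog_of_degree F d \<Longrightarrow> total_degree_le (coeff F k) (d - k)"
  unfolding total_degree_le_def using homog_of_degreeD by fastforce

lemma total_degree_le_imp_degree_le:
  assumes "total_degree_le p n"
  shows "degree p \<le> n" and "degree (coeff p j) \<le> n"
proof -
  have vanish: "coeff (coeff p j) i = 0" if "n < i \<or> n < j" for i j
    using total_degree_leD[OF assms, of j i] that by linarith
  show "degree (coeff p j) \<le> n"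
    by (rule degree_le) (simp add: vanish)
  show "degree p \<le> n"
    by (rule degree_le) (auto intro: poly_eqI simp: vanish)
qed

lemma total_degree_le_imp_degree_coeff:
  assumes "total_degree_le p n" and "coeff p j \<noteq> 0"
  shows "degree (coeff p j) + j \<le> n"
  by (rule total_degree_leD[OF assms(1) leading_coeff_neq_0[OF assms(2)]])

lemma degree_poly_le_total_degree:
  fixes H :: "'a::comm_semiring_1 poly poly"
  assumes total: "total_degree_le H n" and "degree w \<le> 1"
  shows "degree (poly H w) \<le> n"
proof -
  have "degree (coeff H j * w ^ j) \<le> n" for j
  proof (cases "coeff H j = 0")
    case False
    have "degree (w ^ j) \<le> j"
      using coeff_power_at_degree_bound[OF \<open>degree w \<le> 1\<close>, of j] by simp
    then show ?thesis
      using total_degree_le_imp_degree_coeff[OF total False] degree_mult_le[of "coeff H j" "w ^ j"]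
      by linarith
  qed simp
  then show ?thesis
    unfolding poly_altdef by (intro degree_sum_le) auto
qed


section \<open>Lines meeting the curve in at least q points\<close>

lemma curve_points_subset: "curve_points F \<subseteq> proj_points"
  unfolding curve_points_def by blast

lemma eval3_eq_0_if_mem_curve_points:
  "proj_class (x, y, z) \<in> curve_points F \<Longrightarrow> eval3 F x y z = 0"
  unfolding curve_points_def using proj_class_self[of "(x, y, z)"] by fast

(* Every point of the line other than [Q] is [P + tQ] for some t. *)
lemma card_line_inter_curve_le_roots:
  fixes F :: "'a::{finite,field} poly poly poly"
  assumes span: "\<And>v. v \<in> plane a b c \<Longrightarrow> \<exists>s t. v = (s * p1 + t * q1, s * p2 + t * q2, s * p3 + t * q3)"
    and G: "\<And>t. poly G t = eval3 F (p1 + t * q1) (p2 + t * q2) (p3 + t * q3)"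
  shows "card (proj_line a b c \<inter> curve_points F)
    \<le> card {t. poly G t = 0} + (if eval3 F q1 q2 q3 = 0 then 1 else 0)"
proof -
  let ?T = "{t. poly G t = 0}"
  let ?Q = "proj_class (q1, q2, q3)"
  have "proj_line a b c \<inter> curve_points F
      \<subseteq> (\<lambda>t. proj_class (p1 + t * q1, p2 + t * q2, p3 + t * q3)) ` ?T \<union> (curve_points F \<inter> {?Q})"
  proof
    fix P assume P: "P \<in> proj_line a b c \<inter> curve_points F"
    then obtain v where "v \<in> plane a b c" "v \<noteq> (0, 0, 0)" "P = proj_class v"
      unfolding proj_line_eq_image by blast
    then obtain s t where st: "P = proj_class (s * p1 + t * q1, s * p2 + t * q2, s * p3 + t * q3)"
        and nz: "(s * p1 + t * q1, s * p2 + t * q2, s * p3 + t * q3) \<noteq> (0, 0, 0)"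
      using span by blast
    show "P \<in> (\<lambda>t. proj_class (p1 + t * q1, p2 + t * q2, p3 + t * q3)) ` ?T \<union> (curve_points F \<inter> {?Q})"
    proof (cases "s = 0")
      case True
      then have "P = ?Q"
        using st nz proj_class_scale[of t q1 q2 q3] by auto
      then show ?thesis
        using P by blast
    next
      case False
      then have "(s * p1 + t * q1, s * p2 + t * q2, s * p3 + t * q3)
          = (s * (p1 + (t / s) * q1), s * (p2 + (t / s) * q2), s * (p3 + (t / s) * q3))"
        by (simp add: algebra_simps)
      then have P_eq: "P = proj_class (p1 + (t / s) * q1, p2 + (t / s) * q2, p3 + (t / s) * q3)"
        using st False proj_class_scale by simp
      then have "t / s \<in> ?T"
        using P G eval3_eq_0_if_mem_curve_points by fastforce
      then show ?thesis
        using P_eq by blast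
    qed
  qed
  then have "card (proj_line a b c \<inter> curve_points F)
      \<le> card ((\<lambda>t. proj_class (p1 + t * q1, p2 + t * q2, p3 + t * q3)) ` ?T)
        + card (curve_points F \<inter> {?Q})"
    by (meson card_Un_le card_mono finite order.trans)
  also have "\<dots> \<le> card ?T + (if eval3 F q1 q2 q3 = 0 then 1 else 0)"
    using eval3_eq_0_if_mem_curve_points[of q1 q2 q3 F]
    by (intro add_mono card_image_le) (auto simp: card_le_Suc0_iff_eq)
  finally show ?thesis .
qed

lemma eval3_vanishes_on_plane_if_many_points:
  fixes F :: "'a::{finite,field} poly poly poly"
  assumes hom: "homog_of_degree F (CARD('a) - 1)"
    and abc: "(a, b, c) \<noteq> (0, 0, 0)"
    and many: "CARD('a) \<le> card (proj_line a b c \<inter> curve_points F)"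
    and on_plane: "(x, y, z) \<in> plane a b c"
  shows "eval3 F x y z = 0"
proof -
  let ?d = "CARD('a) - 1"
  obtain p1 p2 p3 q1 q2 q3 where
    span: "\<And>v. v \<in> plane a b c \<Longrightarrow> \<exists>s t. v = (s * p1 + t * q1, s * p2 + t * q2, s * p3 + t * q3)"
    using plane_spanned[OF abc] by metis
  obtain G where G: "\<And>t. poly G t = eval3 F (p1 + t * q1) (p2 + t * q2) (p3 + t * q3)"
    and deg_G: "degree G \<le> ?d" and lead_G: "coeff G ?d = eval3 F q1 q2 q3"
    using restriction_to_line[OF hom] by metis
  have "card (proj_line a b c \<inter> curve_points F)
      \<le> card {t. poly G t = 0} + (if eval3 F q1 q2 q3 = 0 then 1 else 0)"
    by (rule card_line_inter_curve_le_roots[OF span G])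
  then have "?d < card {t. poly G t = 0} + (if coeff G ?d = 0 then 1 else 0)"
    using many lead_G card_field_ge_2[where 'a='a] by simp
  then have "G = 0"
    by (rule poly_eq_0_if_roots_exceed_degree_bound[OF deg_G])
  then have Q_on_curve: "eval3 F q1 q2 q3 = 0"
    using lead_G by simp
  obtain s t where st: "(x, y, z) = (s * p1 + t * q1, s * p2 + t * q2, s * p3 + t * q3)"
    using span[OF on_plane] by blast
  show ?thesis
  proof (cases "s = 0")
    case True
    then show ?thesis
      using st eval3_homogeneous[OF hom, of t q1 q2 q3] Q_on_curve by simp
  next
    case False
    then have "(x, y, z) = (s * (p1 + (t / s) * q1), s * (p2 + (t / s) * q2), s * (p3 + (t / s) * q3))"
      using st by (simp add: algebra_simps)
    then have "eval3 F x y z = s ^ ?d * poly G (t / s)"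
      using eval3_homogeneous[OF hom] G by simp
    then show ?thesis
      using \<open>G = 0\<close> by simp
  qed
qed

(* The nesting 'a[X][Y][Z] dictates solving the linear form for its last variable with
   nonzero coefficient: Z here, Y and X in the next two lemmas. The substitution leaves a
   polynomial of total degree at most d that vanishes on all of F_q^2. *)
lemma linform_dvd_if_vanishes_Z:
  fixes F :: "'a::{finite,field} poly poly poly"
  assumes hom: "homog_of_degree F d" and d: "d < CARD('a)" and c: "c \<noteq> 0"
    and vanish: "\<And>x y. eval3 F x y (- (a * x + b * y) / c) = 0"
  shows "linform a b c dvd F"
proof -
  define z0 where "z0 = [:[:0, - a / c:], [:- b / c:]:]"
  define R where "R = poly F z0"
  have "total_degree_le (coeff F k * z0 ^ k) d" if "k \<le> d" for k
    using total_degree_le_mult[OF total_degree_le_coeff_homog[OF hom, of k]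
        total_degree_le_power[OF total_degree_le_linear[of "- a / c" "- b / c"], of k]] that
    unfolding z0_def by simp
  then have "total_degree_le R d"
    unfolding R_def poly_eq_sum_upto[OF homog_degree_le(1)[OF hom]]
    by (intro total_degree_le_sum) simp
  moreover have "poly (poly R [:y:]) x = 0" for x y
  proof -
    have "poly (poly z0 [:y:]) x = - (a * x + b * y) / c"
      unfolding z0_def using c by (simp add: field_simps)
    then show ?thesis
      unfolding R_def eval3_poly_subst using vanish by simp
  qed
  ultimately have "R = 0"
    using poly2_eq_0_if_vanishes[OF total_degree_le_imp_degree_le d] by blast
  then have "[:- z0, 1:] dvd F"
    unfolding R_def by (simp add: poly_eq_0_iff_dvd)
  moreover have "[:- z0, 1:] = smult [:[:1 / c:]:] (linform a b c)"
    unfolding z0_def linform_def using c by (simp add: one_pCons)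
  ultimately show ?thesis
    by (metis dvd_smult dvd_trans dvd_refl)
qed

lemma linform_dvd_if_vanishes_Y:
  fixes F :: "'a::{finite,field} poly poly poly"
  assumes hom: "homog_of_degree F d" and d: "d < CARD('a)" and b: "b \<noteq> 0"
    and vanish: "\<And>x z. eval3 F x (- (a * x) / b) z = 0"
  shows "linform a b 0 dvd F"
proof -
  define L where "L = [:[:0, a:], [:b:]:]"
  define y0 where "y0 = [:0, - a / b:]"
  have "L dvd coeff F k" for k
  proof -
    let ?H = "coeff F k"
    have total: "total_degree_le ?H d"
      using total_degree_le_mono[OF total_degree_le_coeff_homog[OF hom, of k]] by simp
    have "degree (poly ?H y0) \<le> d"
      using total by (rule degree_poly_le_total_degree) (simp add: y0_def)
    moreover have "poly (poly ?H y0) x = 0" for x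
    proof -
      have "poly (poly ?H y0) x = poly (poly ?H [:- (a * x) / b:]) x"
        by (subst poly2_poly_subst) (simp add: y0_def mult.commute)
      also have "\<dots> = 0"
        using homog_degree_le(1)[OF hom] d vanish by (intro poly_coeff_eq_0_if_eval3_vanishes) auto
      finally show ?thesis .
    qed
    ultimately have "poly ?H y0 = 0"
      using d poly_eqI_degree[of UNIV "poly ?H y0" 0] by simp
    then have "[:- y0, 1:] dvd ?H"
      by (simp add: poly_eq_0_iff_dvd)
    moreover have "[:- y0, 1:] = smult [:1 / b:] L"
      unfolding y0_def L_def using b by (simp add: one_pCons)
    ultimately show ?thesis
      by (metis dvd_smult dvd_trans dvd_refl)
  qed
  moreover have "linform a b 0 = [:L:]"
    unfolding linform_def L_def by simp
  ultimately show ?thesis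
    by (simp add: const_poly_dvd_iff)
qed

lemma linform_dvd_if_vanishes_X:
  fixes F :: "'a::{finite,field} poly poly poly"
  assumes hom: "homog_of_degree F d" and d: "d < CARD('a)" and a: "a \<noteq> 0"
    and vanish: "\<And>y z. eval3 F 0 y z = 0"
  shows "linform a 0 0 dvd F"
proof -
  have "coeff (coeff (coeff F k) j) 0 = 0" for j k
  proof (cases "j \<le> d")
    case True
    show ?thesis
    proof (rule sum_powers_eq_0_imp_coeff_eq_0[OF d _ True])
      show "(\<Sum>j\<le>d. coeff (coeff (coeff F k) j) 0 * y ^ j) = 0" for y
        using poly_coeff_eq_0_if_eval3_vanishes[of F 0 y k] homog_degree_le[OF hom] d vanish
          poly2_eq_sum[OF homog_degree_le(2,3)[OF hom], of k y 0]
        by (simp add: zero_power)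
    qed
  next
    case False
    then show ?thesis
      using homog_degree_le(2)[OF hom, of k] by (simp add: coeff_eq_0)
  qed
  then have "[:0, 1:] dvd coeff (coeff F k) j" for j k
    by (simp add: dvd_iff_poly_eq_0 poly_0_coeff_0)
  then have "[:0, a:] dvd coeff (coeff F k) j" for j k
    using a smult_dvd_iff[of a "[:0, 1:]" "coeff (coeff F k) j"] by simp
  then show ?thesis
    unfolding linform_def by (simp add: const_poly_dvd_iff)
qed

lemma linform_dvd_if_vanishes_on_plane:
  fixes F :: "'a::{finite,field} poly poly poly"
  assumes hom: "homog_of_degree F d" and d: "d < CARD('a)" and abc: "(a, b, c) \<noteq> (0, 0, 0)"
    and vanish: "\<And>x y z. (x, y, z) \<in> plane a b c \<Longrightarrow> eval3 F x y z = 0"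
  shows "linform a b c dvd F"
proof -
  consider "c \<noteq> 0" | "c = 0" "b \<noteq> 0" | "c = 0" "b = 0" "a \<noteq> 0"
    using abc by auto
  then show ?thesis
  proof cases
    case 1
    have "(x, y, - (a * x + b * y) / c) \<in> plane a b c" for x y
      using 1 by (simp add: plane_def)
    then show ?thesis
      using linform_dvd_if_vanishes_Z[OF hom d 1] vanish by blast
  next
    case 2
    have "(x, - (a * x) / b, z) \<in> plane a b c" for x z
      using 2 by (simp add: plane_def)
    then show ?thesis
      using linform_dvd_if_vanishes_Y[OF hom d 2(2)] vanish 2(1) by blast
  next
    case 3
    have "(0, y, z) \<in> plane a b c" for y z
      using 3 by (simp add: plane_def)
    then show ?thesis
      using linform_dvd_if_vanishes_X[OF hom d 3(3)] vanish 3(1,2) by blast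
  qed
qed

lemma card_line_inter_curve_le:
  fixes F :: "'a::{finite,field} poly poly poly"
  assumes hom: "homog_of_degree F (CARD('a) - 1)" and "no_linear_components F"
    and "l \<in> proj_lines"
  shows "card (l \<inter> curve_points F) \<le> CARD('a) - 1"
proof (rule ccontr)
  assume many: "\<not> ?thesis"
  obtain a b c where abc: "(a, b, c) \<noteq> (0, 0, 0)" and l: "l = proj_line a b c"
    using \<open>l \<in> proj_lines\<close> unfolding proj_lines_eq by blast
  have "CARD('a) \<le> card (proj_line a b c \<inter> curve_points F)"
    using many unfolding l by linarith
  then have "linform a b c dvd F"
    using eval3_vanishes_on_plane_if_many_points[OF hom abc] card_field_ge_2[where 'a='a]
    by (intro linform_dvd_if_vanishes_on_plane[OF hom _ abc]) auto
  with abc \<open>no_linear_components F\<close> show False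
    unfolding no_linear_components_def by blast
qed


section \<open>Counting lines by the size of their intersection with the curve\<close>

lemma sum_lines_quadratic_weight:
  fixes C :: "('a::{finite,field} \<times> 'a \<times> 'a) set set" and k :: int
  assumes "C \<subseteq> proj_points" and "card C = (CARD('a) - 1) ^ 2"
  shows "(\<Sum>l\<in>proj_lines. (int (card (l \<inter> C)) - k) * (int (card (l \<inter> C)) - int CARD('a) + 2))
    = 3 * (int CARD('a) - 1) ^ 2 - 3 * k"
proof -
  let ?q = "int CARD('a)"
  let ?n = "\<lambda>l. int (card (l \<inter> C))"
  have N: "int (card C) = (?q - 1) ^ 2"
    using assms(2) card_field_ge_2[where 'a='a] by (simp add: of_nat_diff)
  have S1: "(\<Sum>l\<in>proj_lines. ?n l) = (?q + 1) * (?q - 1) ^ 2"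
    using arg_cong[OF sum_card_line_inter[OF assms(1)], of int] N
    by (simp add: of_nat_sum algebra_simps)
  have S2: "(\<Sum>l\<in>proj_lines. ?n l ^ 2) = (?q - 1) ^ 2 * ((?q - 1) ^ 2 + ?q)"
    using arg_cong[OF sum_card_line_inter_squared[OF assms(1)], of int] N
    by (simp add: of_nat_sum algebra_simps)
  have L: "int (card (proj_lines :: ('a \<times> 'a \<times> 'a) set set set)) = ?q ^ 2 + ?q + 1"
    by (simp add: card_proj_lines)
  have "(\<Sum>l\<in>proj_lines. (?n l - k) * (?n l - ?q + 2))
      = (\<Sum>l\<in>proj_lines. ?n l ^ 2 - (k + ?q - 2) * ?n l + k * (?q - 2))"
    by (intro sum.cong refl) (simp add: algebra_simps power2_eq_square)
  also have "\<dots> = (\<Sum>l\<in>proj_lines. ?n l ^ 2) - (k + ?q - 2) * (\<Sum>l\<in>proj_lines. ?n l)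
      + k * (?q - 2) * int (card (proj_lines :: ('a \<times> 'a \<times> 'a) set set set))"
    by (simp add: sum.distrib sum_subtractf sum_distrib_left)
  also have "\<dots> = 3 * (?q - 1) ^ 2 - 3 * k"
    unfolding S1 S2 L by (simp add: algebra_simps power2_eq_square)
  finally show ?thesis .
qed

lemma sum_line_count_eq_sum_lines:
  fixes F :: "'a::{finite,field} poly poly poly" and f :: "nat \<Rightarrow> int"
  assumes "finite I" and "\<And>l. l \<in> proj_lines \<Longrightarrow> card (l \<inter> curve_points F) \<in> I"
  shows "(\<Sum>i\<in>I. f i * int (line_count F i)) = (\<Sum>l\<in>proj_lines. f (card (l \<inter> curve_points F)))"
proof -
  let ?n = "\<lambda>l. card (l \<inter> curve_points F)"
  have "(\<Sum>i\<in>I. f i * int (line_count F i)) = (\<Sum>i\<in>I. \<Sum>l\<in>{l \<in> proj_lines. ?n l = i}. f (?n l))"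
    unfolding line_count_def by (intro sum.cong refl) simp
  also have "\<dots> = (\<Sum>l\<in>proj_lines. f (?n l))"
    using assms by (intro sum.group) auto
  finally show ?thesis .
qed

lemma k0_le_card_line_inter:
  fixes F :: "'a::{finite,field} poly poly poly"
  assumes "l \<in> proj_lines"
  shows "k0 F \<le> card (l \<inter> curve_points F)"
proof -
  have "l \<in> {l' \<in> proj_lines. card (l' \<inter> curve_points F) = card (l \<inter> curve_points F)}"
    using assms by simp
  then have "line_count F (card (l \<inter> curve_points F)) \<noteq> 0"
    unfolding line_count_def by (auto simp: card_eq_0_iff)
  then show ?thesis
    unfolding k0_def by (rule Least_le)
qed

lemma sum_quadratic_weights_le_top:
  fixes a :: "nat \<Rightarrow> nat"
  assumes "k \<le> m"
  shows "(\<Sum>i = k..m. (int i - int k) * (int i - int m + 1) * int (a i))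
    \<le> (int m - int k) * int (a m)"
proof -
  let ?g = "\<lambda>i. (int i - int k) * (int i - int m + 1) * int (a i)"
  have "(\<Sum>i = k..m. ?g i) = ?g m + (\<Sum>i = k..<m. ?g i)"
    using assms by (rule sum.last_plus)
  moreover have "?g i \<le> 0" if "i \<in> {k..<m}" for i
    using that by (intro mult_nonpos_nonneg mult_nonneg_nonpos) auto
  then have "(\<Sum>i = k..<m. ?g i) \<le> 0"
    by (rule sum_nonpos)
  ultimately show ?thesis
    by simp
qed

theorem lemma3p14:
  fixes F :: "'a::{finite, field} poly poly poly"
  assumes "CARD('a) \<ge> 5"
    and "homog_of_degree F (CARD('a) - 1)"
    and "no_linear_components F"
    and "card (curve_points F) = (CARD('a) - 1)^2"
  shows "(\<Sum>i = k0 F..CARD('a) - 1. (int i - int (k0 F)) * (int i - int CARD('a) + 2) * int (line_count F i))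
           = 3 * (int CARD('a) - 1)^2 - 3 * int (k0 F)
       \<and> (int CARD('a) - int (k0 F) - 1) * int (line_count F (CARD('a) - 1)) \<ge> 3 * (int CARD('a) - 1)^2 - 3 * int (k0 F)"
proof -
  let ?q = "CARD('a)" and ?k = "k0 F"
  let ?w = "\<lambda>i. (int i - int ?k) * (int i - int ?q + 2)"
  have bounds: "card (l \<inter> curve_points F) \<in> {?k..?q - 1}" if "l \<in> proj_lines" for l
    using k0_le_card_line_inter[OF that] card_line_inter_curve_le[OF assms(2,3) that] by simp
  have "(\<Sum>i = ?k..?q - 1. ?w i * int (line_count F i))
      = (\<Sum>l\<in>proj_lines. ?w (card (l \<inter> curve_points F)))"
    using bounds by (intro sum_line_count_eq_sum_lines) auto
  also have "\<dots> = 3 * (int ?q - 1)^2 - 3 * int ?k"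
    using curve_points_subset assms(4) by (rule sum_lines_quadratic_weight)
  finally have identity:
    "(\<Sum>i = ?k..?q - 1. ?w i * int (line_count F i)) = 3 * (int ?q - 1)^2 - 3 * int ?k" .
  obtain l where "l \<in> (proj_lines :: ('a \<times> 'a \<times> 'a) set set set)"
    using card_proj_lines[where 'a='a] by fastforce
  then have "?k \<le> ?q - 1"
    using bounds[of l] by (meson atLeastAtMost_iff order.trans)
  then have "(\<Sum>i = ?k..?q - 1. ?w i * int (line_count F i))
      \<le> (int ?q - int ?k - 1) * int (line_count F (?q - 1))"
    using sum_quadratic_weights_le_top[of ?k "?q - 1" "line_count F"] card_field_ge_2[where 'a='a]
    by (simp add: of_nat_diff algebra_simps)
  with identity show ?thesis
    by (simp add: mult.assoc)
qed

end
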